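(* Let $m$ and $s$ be fixed positive integers and let $G$ be a graph on $n$ vertices. Suppose there is a partition of $V(G)$ into sets $V_1,\dots,V_s$ such that: (i) for each $i<s$ there is no path with $3$ vertices whose two endpoints both lie in $V_i$; (ii) there is no path with $m+1$ vertices whose endpoints lie in $V_i$ and $V_j$ for some $i\neq j$; (iii) $V_s$ is an independent set. Then $|E(G)|=O(n)$ (as $n\to\infty$, with the implied constant depending only on $m$ and $s$).
   Context: Paths are subgraphs; a path with $t$ vertices has $t-1$ edges. *)

theory Defs
  imports Complex_Main
begin

definition simple_graph :: "'a set \<Rightarrow> 'a set set \<Rightarrow> bool" where
  "simple_graph V E \<longleftrightarrow> finite V \<and> (\<forall>e\<in>E. e \<subseteq> V \<and> card e = 2)"

text \<open>A path in the graph given as its vertex sequence: distinct vertices,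
  consecutive ones adjacent. A path with t vertices is a list of length t;
  its endpoints are hd and last.\<close>
definition is_path :: "'a set set \<Rightarrow> 'a list \<Rightarrow> bool" where
  "is_path E xs \<longleftrightarrow> xs \<noteq> [] \<and> distinct xs \<and>
     (\<forall>i. i + 1 < length xs \<longrightarrow> {xs ! i, xs ! (i + 1)} \<in> E)"

definition is_partition :: "'a set \<Rightarrow> nat \<Rightarrow> (nat \<Rightarrow> 'a set) \<Rightarrow> bool" where
  "is_partition V s P \<longleftrightarrow> (\<Union>i\<in>{1..s}. P i) = V \<and>
     (\<forall>i\<in>{1..s}. \<forall>j\<in>{1..s}. i \<noteq> j \<longrightarrow> P i \<inter> P j = {})"

definition independent :: "'a set set \<Rightarrow> 'a set \<Rightarrow> bool" where
  "independent E A \<longleftrightarrow> (\<forall>u\<in>A. \<forall>v\<in>A. {u, v} \<notin> E)"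

end

theory Submission
  imports Defs
begin

text \<open>A vertex with two distinct neighbours in a part V_i is the middle vertex of a path
  with three vertices and both endpoints in V_i. So condition (i) says that every vertex has
  at most one neighbour in V_i, whence at most n edges meet V_i; by (iii) every edge meets
  some V_i with i < s, so there are at most (s - 1) n edges.\<close>

lemma finite_edges:
  assumes "simple_graph V E"
  shows "finite E"
proof (rule finite_subset)
  show "E \<subseteq> Pow V" using assms by (auto simp: simple_graph_def)
  show "finite (Pow V)" using assms by (simp add: simple_graph_def)
qed

lemma edge_obtain:
  assumes "simple_graph V E" and "e \<in> E"
  obtains u v where "e = {u, v}" "u \<noteq> v" "u \<in> V" "v \<in> V"
  using assms by (auto simp: simple_graph_def card_2_iff)

lemma is_path_three:
  "is_path E [x, y, z] \<longleftrightarrow> distinct [x, y, z] \<and> {x, y} \<in> E \<and> {y, z} \<in> E"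
  by (auto simp: is_path_def less_Suc_eq numeral_eq_Suc)

lemma neighbour_in_part_unique:
  assumes no_path: "\<not> (\<exists>xs. is_path E xs \<and> length xs = 3 \<and> hd xs \<in> A \<and> last xs \<in> A)"
    and "{w, x} \<in> E" "{w, y} \<in> E" "x \<in> A" "y \<in> A" "x \<noteq> w" "y \<noteq> w"
  shows "x = y"
proof (rule ccontr)
  assume "x \<noteq> y"
  with assms(2-) have "is_path E [x, w, y]"
    by (simp add: is_path_three insert_commute)
  with no_path \<open>x \<in> A\<close> \<open>y \<in> A\<close> show False by fastforce
qed

lemma card_edges_meeting_le:
  assumes sg: "simple_graph V E"
    and no_path: "\<not> (\<exists>xs. is_path E xs \<and> length xs = 3 \<and> hd xs \<in> A \<and> last xs \<in> A)"
  shows "card {e\<in>E. e \<inter> A \<noteq> {}} \<le> card V"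
proof -
  let ?M = "{e\<in>E. e \<inter> A \<noteq> {}}"
  define other where "other e = (SOME w. \<exists>x. e = {w, x} \<and> w \<noteq> x \<and> x \<in> A)" for e
  have other: "\<exists>x. e = {other e, x} \<and> other e \<noteq> x \<and> x \<in> A" if "e \<in> ?M" for e
  proof -
    from that have "e \<in> E" by simp
    then obtain u v where "e = {u, v}" "u \<noteq> v" by (rule edge_obtain[OF sg])
    with that have "\<exists>w x. e = {w, x} \<and> w \<noteq> x \<and> x \<in> A" by blast
    then show ?thesis unfolding other_def by (rule someI_ex)
  qed
  have "inj_on other ?M"
  proof (rule inj_onI)
    fix e1 e2 assume e1: "e1 \<in> ?M" and e2: "e2 \<in> ?M" and eq: "other e1 = other e2"
    obtain x1 where x1: "e1 = {other e1, x1}" "other e1 \<noteq> x1" "x1 \<in> A" using other[OF e1] by blast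
    obtain x2 where x2: "e2 = {other e2, x2}" "other e2 \<noteq> x2" "x2 \<in> A" using other[OF e2] by blast
    have "x1 = x2"
      using neighbour_in_part_unique[OF no_path, of "other e1" x1 x2] e1 e2 x1 x2 eq by auto
    then show "e1 = e2" using x1 x2 eq by simp
  qed
  moreover have "other ` ?M \<subseteq> V"
  proof
    fix w assume "w \<in> other ` ?M"
    then obtain e where e: "e \<in> ?M" "w = other e" by blast
    with other[OF e(1)] sg show "w \<in> V" by (auto simp: simple_graph_def)
  qed
  moreover have "finite V" using sg by (simp add: simple_graph_def)
  ultimately show ?thesis by (rule card_inj_on_le)
qed

lemma edges_meet_parts_below_last:
  assumes sg: "simple_graph V E" and part: "is_partition V s P"
    and ind: "independent E (P s)"
  shows "E \<subseteq> (\<Union>i\<in>{1..<s}. {e\<in>E. e \<inter> P i \<noteq> {}})"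
proof
  fix e assume e: "e \<in> E"
  then obtain u v where uv: "e = {u, v}" "u \<noteq> v" "u \<in> V" "v \<in> V"
    using edge_obtain[OF sg] by blast
  have "\<not> (u \<in> P s \<and> v \<in> P s)" using ind e uv by (auto simp: independent_def)
  then obtain w i where "w \<in> e" "i \<in> {1..s}" "w \<in> P i" "i \<noteq> s"
    using part uv unfolding is_partition_def by blast
  then show "e \<in> (\<Union>i\<in>{1..<s}. {e\<in>E. e \<inter> P i \<noteq> {}})" using e by auto
qed

lemma card_edges_le_partition:
  assumes sg: "simple_graph V E" and part: "is_partition V s P"
    and no_path: "\<forall>i\<in>{1..<s}. \<not> (\<exists>xs. is_path E xs \<and> length xs = 3 \<and> hd xs \<in> P i \<and> last xs \<in> P i)"
    and ind: "independent E (P s)"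
  shows "card E \<le> (s - 1) * card V"
proof -
  have "card E \<le> card (\<Union>i\<in>{1..<s}. {e\<in>E. e \<inter> P i \<noteq> {}})"
    using edges_meet_parts_below_last[OF sg part ind] finite_edges[OF sg]
    by (intro card_mono) auto
  also have "\<dots> \<le> (\<Sum>i\<in>{1..<s}. card {e\<in>E. e \<inter> P i \<noteq> {}})"
    by (rule card_UN_le) simp
  also have "\<dots> \<le> (\<Sum>i\<in>{1..<s}. card V)"
    using card_edges_meeting_le[OF sg] no_path by (intro sum_mono) blast
  also have "\<dots> = (s - 1) * card V" by simp
  finally show ?thesis .
qed

theorem lemma3:
  fixes m s :: nat
  assumes "m \<ge> 1" and "s \<ge> 1"
  shows "\<exists>C::real. \<forall>(V::nat set) (E::nat set set) (P::nat \<Rightarrow> nat set).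
     simple_graph V E \<and> is_partition V s P
     \<and> (\<forall>i\<in>{1..<s}. \<not> (\<exists>xs. is_path E xs \<and> length xs = 3 \<and> hd xs \<in> P i \<and> last xs \<in> P i))
     \<and> (\<forall>i\<in>{1..s}. \<forall>j\<in>{1..s}. i \<noteq> j \<longrightarrow>
          \<not> (\<exists>xs. is_path E xs \<and> length xs = m + 1 \<and> hd xs \<in> P i \<and> last xs \<in> P j))
     \<and> independent E (P s)
     \<longrightarrow> real (card E) \<le> C * real (card V)"
proof (intro exI[of _ "real (s - 1)"] allI impI, elim conjE)
  fix V :: "nat set" and E :: "nat set set" and P :: "nat \<Rightarrow> nat set"
  assume "simple_graph V E" "is_partition V s P"
    "\<forall>i\<in>{1..<s}. \<not> (\<exists>xs. is_path E xs \<and> length xs = 3 \<and> hd xs \<in> P i \<and> last xs \<in> P i)"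
    "independent E (P s)"
  then have "card E \<le> (s - 1) * card V" by (rule card_edges_le_partition)
  then show "real (card E) \<le> real (s - 1) * real (card V)"
    by (metis of_nat_le_iff of_nat_mult)
qed

end
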